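(* Let $\mathcal{Y}\subset\mathbb{R}$ be finite, $\mathcal{D}\subset\mathbb{R}$ finite, $p_D$ a zero-mean distribution on $\mathcal{D}$ giving positive probability to at least two elements, $\epsilon>0$, and let $\mathbf{D}_i$ be a row vector of length $n$ with i.i.d. entries distributed according to $p_D$. There exist a constant $c$ and a constant $\tilde{p}<1$, both independent of $\mathbf{y},\mathbf{y}'$ (and of $n$), such that for all sufficiently large $n$, for any $\mathbf{y},\mathbf{y}'\in\mathcal{Y}^n$ differing in $t\ge1$ components, $$\Pr\{Q_n(\mathbf{D}_i\mathbf{y})=Q_n(\mathbf{D}_i\mathbf{y}')\}\le\min\Big(\tilde{p},\frac{c}{\sqrt{t}}\Big).$$
   Context: $Q_n$ is the scalar quantizer that uniformly quantizes the interval $(-n^{0.5+\epsilon},n^{0.5+\epsilon})$ with step size $\Delta_n=2n^{-\epsilon}$, values outside this interval being mapped to the quantization level farthest from the origin on their side. *)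

theory Defs
  imports "HOL-Probability.Probability"
begin

text \<open>The scalar quantizer Q_n (with parameter eps): the interval (-L, L), L = n powr (1/2 + eps),
  is divided uniformly into cells of width Delta = 2 * n powr (-eps) starting at -L
  (the last cell is truncated at L if 2L/Delta is not an integer); each cell is mapped to its
  midpoint.\<close>

definition Q_len :: "nat \<Rightarrow> real \<Rightarrow> real" where
  "Q_len n eps = real n powr (1/2 + eps)"

definition Q_step :: "nat \<Rightarrow> real \<Rightarrow> real" where
  "Q_step n eps = 2 * real n powr (- eps)"

definition Q_cells :: "nat \<Rightarrow> real \<Rightarrow> int" where
  "Q_cells n eps = \<lceil>2 * Q_len n eps / Q_step n eps\<rceil>"

definition Q_index :: "nat \<Rightarrow> real \<Rightarrow> real \<Rightarrow> int" where
  "Q_index n eps x =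
     max 0 (min (Q_cells n eps - 1) \<lfloor>(x + Q_len n eps) / Q_step n eps\<rfloor>)"

definition Q :: "nat \<Rightarrow> real \<Rightarrow> real \<Rightarrow> real" where
  "Q n eps x = - Q_len n eps + Q_step n eps / 2 + Q_step n eps * real_of_int (Q_index n eps x)"

end

theory Submission
  imports Defs "HOL-Real_Asymp.Real_Asymp"
begin

text \<open>Write \<open>z = y - y'\<close>. If \<open>Q\<^sub>n(D y) = Q\<^sub>n(D y')\<close>, then either one of the two sums leaves
  \<open>(-L, L)\<close>, \<open>L = n\<^bsup>1/2+\<epsilon>\<^esup>\<close>, which by Hoeffding's inequality has probability
  \<open>exp(-\<Omega>(n\<^bsup>2\<epsilon>\<^esup>))\<close>, or \<open>|D z| < \<Delta>\<^sub>n\<close>. To bound the latter, write \<open>p\<^sub>D\<close> as a mixture: with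
  probability \<open>r\<close> a fair coin between two atoms \<open>a \<noteq> b\<close>, otherwise a residual law. By pigeonhole,
  \<open>s \<ge> t/k\<close> of the \<open>t\<close> nonzero entries of \<open>z\<close> share one value \<open>w\<close>, where \<open>k\<close> bounds the number
  of possible differences. Conditioned on everything but the fair coins at these coordinates,
  \<open>D z\<close> is affine with slope \<open>(b - a) w\<close> in a \<open>Binomial(m, 1/2)\<close> count; once \<open>2\<Delta>\<^sub>n < |b - a| |w|\<close>
  the window catches at most one value of the count, which has probability at most
  \<open>1/\<surd>(m+1)\<close>. Averaging over \<open>m \<sim> Binomial(s, r)\<close> gives both \<open>1 - r/4\<close> and \<open>O(1/\<surd>s)\<close>.\<close>

lemma measure_bind_pmf_le_expectation:
  fixes M :: "'a pmf" and f :: "'a \<Rightarrow> 'b pmf"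
  assumes "\<And>x. x \<in> set_pmf M \<Longrightarrow> measure_pmf.prob (f x) A \<le> g x"
    and "integrable M g"
  shows "measure_pmf.prob (bind_pmf M f) A \<le> measure_pmf.expectation M g"
proof -
  have g_nonneg: "AE x in M. 0 \<le> g x"
    using assms(1) by (intro AE_pmfI) (meson measure_nonneg order_trans)
  have "emeasure (bind_pmf M f) A = (\<integral>\<^sup>+x. emeasure (f x) A \<partial>M)"
    by simp
  also have "\<dots> \<le> (\<integral>\<^sup>+x. ennreal (g x) \<partial>M)"
    using assms(1) by (intro nn_integral_mono_AE AE_pmfI)
      (simp add: measure_pmf.emeasure_eq_measure ennreal_leI)
  also have "\<dots> = ennreal (measure_pmf.expectation M g)"
    using assms(2) g_nonneg by (rule nn_integral_eq_integral)
  finally have "emeasure (bind_pmf M f) A \<le> ennreal (measure_pmf.expectation M g)" .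
  moreover have "0 \<le> measure_pmf.expectation M g"
    using g_nonneg by (simp add: integral_nonneg_AE)
  ultimately show ?thesis
    by (simp add: measure_pmf.emeasure_eq_measure ennreal_leI)
qed

lemma Pi_pmf_map_dep:
  assumes "finite A"
  shows "Pi_pmf A dflt (\<lambda>x. map_pmf (f x) (g x))
       = map_pmf (\<lambda>h x. if x \<in> A then f x (h x) else dflt) (Pi_pmf A dflt' g)"
proof -
  have "Pi_pmf A dflt (\<lambda>x. map_pmf (f x) (g x))
      = Pi_pmf A dflt (\<lambda>x. bind_pmf (g x) (\<lambda>y. return_pmf (f x y)))"
    by (simp add: map_pmf_def)
  also have "\<dots> = bind_pmf (Pi_pmf A dflt' g) (\<lambda>h. Pi_pmf A dflt (\<lambda>x. return_pmf (f x (h x))))"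
    using assms by (rule Pi_pmf_bind[where q = "\<lambda>x y. return_pmf (f x y)"])
  also have "\<dots> = bind_pmf (Pi_pmf A dflt' g) (\<lambda>h. return_pmf (\<lambda>x. if x \<in> A then f x (h x) else dflt))"
    using assms by simp
  also have "\<dots> = map_pmf (\<lambda>h x. if x \<in> A then f x (h x) else dflt) (Pi_pmf A dflt' g)"
    by (simp add: map_pmf_def)
  finally show ?thesis .
qed

section \<open>Binomial distributions\<close>

lemma central_binomial_Suc_div_four_power:
  "real ((2 * Suc k) choose Suc k) / 4 ^ Suc k
     = real ((2 * k) choose k) / 4 ^ k * (2 * real k + 1) / (2 * real k + 2)"
proof -
  have sym: "Suc (2 * k) choose Suc k = Suc (2 * k) choose k"
    using binomial_symmetric[of "Suc k" "Suc (2 * k)"] by simp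
  have "(2 * Suc k) choose Suc k = (Suc (2 * k) choose k) + (Suc (2 * k) choose Suc k)"
    by (simp add: numeral_2_eq_2)
  then have double: "real ((2 * Suc k) choose Suc k) = 2 * real (Suc (2 * k) choose Suc k)"
    using sym by simp
  have "real (Suc (2 * k)) * real ((2 * k) choose k) = real (Suc (2 * k) choose Suc k) * real (Suc k)"
    using Suc_times_binomial_eq[of "2 * k" k] by (metis of_nat_mult)
  then have odd: "real (Suc (2 * k) choose Suc k) = (2 * real k + 1) * real ((2 * k) choose k) / (real k + 1)"
    by (simp add: eq_divide_eq algebra_simps del: binomial_Suc_Suc)
  show ?thesis
    unfolding double odd by simp algebra
qed

lemma central_binomial_sq_le: "(real ((2 * k) choose k) / 4 ^ k)\<^sup>2 * (2 * k + 1) \<le> 1"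
proof (induction k)
  case 0
  then show ?case by simp
next
  case (Suc k)
  define a where "a = real ((2 * k) choose k) / 4 ^ k"
  have "(real ((2 * Suc k) choose Suc k) / 4 ^ Suc k)\<^sup>2 * (2 * real (Suc k) + 1)
      = (a\<^sup>2 * (2 * real k + 1)) * ((2 * real k + 1) * (2 * real k + 3) / (2 * real k + 2)\<^sup>2)"
    unfolding central_binomial_Suc_div_four_power a_def[symmetric]
    by (simp add: field_simps power2_eq_square)
  also have "\<dots> \<le> 1 * 1"
  proof (rule mult_mono)
    show "a\<^sup>2 * (2 * real k + 1) \<le> 1"
      using Suc.IH by (simp add: a_def add.commute)
    have "(2 * real k + 1) * (2 * real k + 3) \<le> (2 * real k + 2)\<^sup>2"
      by (simp add: power2_eq_square algebra_simps)
    then show "(2 * real k + 1) * (2 * real k + 3) / (2 * real k + 2)\<^sup>2 \<le> 1"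
      by (simp add: divide_le_eq)
  qed auto
  finally show ?case by simp
qed

lemma central_binomial_le_inv_sqrt: "real ((2 * k) choose k) / 4 ^ k \<le> 1 / sqrt (2 * k + 1)"
proof -
  have "(real ((2 * k) choose k) / 4 ^ k)\<^sup>2 \<le> 1 / (2 * k + 1)"
    using central_binomial_sq_le[of k] by (simp add: field_simps)
  then have "real ((2 * k) choose k) / 4 ^ k \<le> sqrt (1 / (2 * k + 1))"
    by (rule real_le_rsqrt)
  then show ?thesis by (simp add: real_sqrt_divide)
qed

lemma pmf_binomial_half_le: "pmf (binomial_pmf m (1/2)) j \<le> 1 / sqrt (real m + 1)"
proof (cases "j \<le> m")
  case False
  then show ?thesis by (simp add: pmf_binomial binomial_eq_0)
next
  case True
  have "pmf (binomial_pmf m (1/2)) j = real (m choose j) / 2 ^ m"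
    using True by (simp add: pmf_binomial power_one_over power_add[symmetric])
  also have "\<dots> \<le> real (m choose (m div 2)) / 2 ^ m"
    by (intro divide_right_mono) (simp_all add: binomial_maximum)
  also have "\<dots> \<le> 1 / sqrt (real m + 1)"
  proof (cases "even m")
    case True
    then obtain k where m: "m = 2 * k" by blast
    have "(2::real) ^ (2 * k) = 4 ^ k" by (simp add: power_mult)
    then show ?thesis
      using central_binomial_le_inv_sqrt[of k] m by (simp add: ac_simps)
  next
    case False
    then obtain k where m: "m = 2 * k + 1" using oddE by blast
    have "(2 * Suc k) choose Suc k = (Suc (2 * k) choose k) + (Suc (2 * k) choose Suc k)"
      by (simp add: numeral_2_eq_2)
    then have "(2 * Suc k) choose Suc k = 2 * (m choose (m div 2))"
      using binomial_symmetric[of "Suc k" "Suc (2 * k)"] m by simp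
    moreover have "(4::real) ^ Suc k = 2 * 2 ^ m" using m by (simp add: power_mult)
    ultimately have "real (m choose (m div 2)) / 2 ^ m = real ((2 * Suc k) choose Suc k) / 4 ^ Suc k"
      by simp
    also have "\<dots> \<le> 1 / sqrt (2 * Suc k + 1)"
      by (rule central_binomial_le_inv_sqrt)
    also have "\<dots> \<le> 1 / sqrt (real m + 1)"
      using m by (intro divide_left_mono) auto
    finally show ?thesis .
  qed
  finally show ?thesis .
qed

lemma prob_binomial_half_window_le:
  fixes A C \<Delta> :: real
  assumes gap: "2 * \<Delta> \<le> \<bar>C\<bar>"
  shows "measure_pmf.prob (binomial_pmf m (1/2)) {k. \<bar>A + C * real k\<bar> < \<Delta>} \<le> 1 / sqrt (real m + 1)"
proof (cases "{k. \<bar>A + C * real k\<bar> < \<Delta>} = {}")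
  case True
  then show ?thesis by simp
next
  case False
  then obtain k0 where k0: "\<bar>A + C * real k0\<bar> < \<Delta>" by auto
  have "{k. \<bar>A + C * real k\<bar> < \<Delta>} \<subseteq> {k0}"
  proof
    fix k
    assume "k \<in> {k. \<bar>A + C * real k\<bar> < \<Delta>}"
    then have "\<bar>C * (real k - real k0)\<bar> < 2 * \<Delta>"
      using k0 by (simp add: algebra_simps abs_if split: if_splits)
    then have "\<bar>C\<bar> * \<bar>real k - real k0\<bar> < \<bar>C\<bar> * 1"
      using gap by (simp add: abs_mult)
    then have "\<bar>real k - real k0\<bar> < 1"
      by (metis abs_ge_zero mult_less_cancel_left_pos mult_zero_left order_less_irrefl order_le_less)
    then show "k \<in> {k0}"
      by simp
  qed
  then have "measure_pmf.prob (binomial_pmf m (1/2)) {k. \<bar>A + C * real k\<bar> < \<Delta>}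
      \<le> measure_pmf.prob (binomial_pmf m (1/2)) {k0}"
    by (rule measure_pmf.finite_measure_mono) simp
  also have "\<dots> \<le> 1 / sqrt (real m + 1)"
    using pmf_binomial_half_le by (simp add: measure_pmf_single)
  finally show ?thesis .
qed

lemma prob_pair_count_window_le:
  assumes "finite J" and gap: "2 * \<Delta> \<le> \<bar>C\<bar>"
  shows "measure_pmf.prob (pair_pmf PA (Pi_pmf J False (\<lambda>_. bernoulli_pmf (1/2))))
           {(f, g). \<bar>c0 f + C * real (card {i\<in>J. g i})\<bar> < \<Delta>}
         \<le> 1 / sqrt (real (card J) + 1)"
proof -
  define PJ where "PJ = Pi_pmf J False (\<lambda>_. bernoulli_pmf (1/2))"
  have pair: "pair_pmf PA PJ = bind_pmf PA (\<lambda>f. map_pmf (\<lambda>g. (f, g)) PJ)"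
    by (simp add: pair_pmf_def map_pmf_def)
  have "measure_pmf.prob (pair_pmf PA PJ) {(f, g). \<bar>c0 f + C * real (card {i\<in>J. g i})\<bar> < \<Delta>}
      \<le> measure_pmf.expectation PA (\<lambda>_. 1 / sqrt (real (card J) + 1))"
    unfolding pair
  proof (rule measure_bind_pmf_le_expectation)
    fix f
    have "map_pmf (\<lambda>g. card {i\<in>J. g i}) PJ = binomial_pmf (card J) (1/2)"
      unfolding PJ_def by (rule binomial_pmf_altdef'[symmetric]) (use assms in auto)
    then have "measure_pmf.prob (map_pmf (\<lambda>g. (f, g)) PJ) {(f, g). \<bar>c0 f + C * real (card {i\<in>J. g i})\<bar> < \<Delta>}
        = measure_pmf.prob (binomial_pmf (card J) (1/2)) {k. \<bar>c0 f + C * real k\<bar> < \<Delta>}"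
      by (metis (no_types, lifting) measure_map_pmf vimage_Collect case_prod_conv)
    also have "\<dots> \<le> 1 / sqrt (real (card J) + 1)"
      using gap by (rule prob_binomial_half_window_le)
    finally show "measure_pmf.prob (map_pmf (\<lambda>g. (f, g)) PJ)
        {(f, g). \<bar>c0 f + C * real (card {i\<in>J. g i})\<bar> < \<Delta>} \<le> 1 / sqrt (real (card J) + 1)" .
  qed simp
  then show ?thesis
    unfolding PJ_def by simp
qed

lemma expectation_binomial_inv_sqrt_le_const:
  fixes r :: real
  assumes r: "0 < r" "r \<le> 1" and m: "m \<ge> 1"
  shows "measure_pmf.expectation (binomial_pmf m r) (\<lambda>k. 1 / sqrt (real k + 1)) \<le> 1 - r/4"
proof -
  define M where "M = binomial_pmf m r"
  define g where "g = (\<lambda>k::nat. 1 - indicator {k. 0 < k} k / 4 :: real)"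
  have integrand_le: "1 / sqrt (real k + 1) \<le> g k" for k
  proof (cases "k = 0")
    case True
    then show ?thesis by (simp add: g_def)
  next
    case False
    have "4/3 \<le> sqrt (2::real)"
      by (rule real_le_rsqrt) (simp add: power2_eq_square)
    also have "\<dots> \<le> sqrt (real k + 1)"
      using False by simp
    finally have "1 / sqrt (real k + 1) \<le> 1 / (4/3)"
      by (intro divide_left_mono) auto
    then show ?thesis
      using False by (simp add: g_def)
  qed
  have "integrable M (\<lambda>k. 1 / sqrt (real k + 1))"
    by (rule measure_pmf.integrable_const_bound[where B = 1]) (auto simp: divide_le_eq)
  moreover have "integrable M g"
    by (rule measure_pmf.integrable_const_bound[where B = 1]) (auto simp: g_def indicator_def)
  ultimately have "measure_pmf.expectation M (\<lambda>k. 1 / sqrt (real k + 1)) \<le> measure_pmf.expectation M g"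
    using integrand_le by (intro integral_mono) auto
  also have "measure_pmf.expectation M g = 1 - measure_pmf.prob M {k. 0 < k} / 4"
  proof -
    have "integrable M (\<lambda>k. indicator {k. 0 < k} k / 4 :: real)"
      by (rule measure_pmf.integrable_const_bound[where B = 1]) (auto simp: indicator_def)
    then show ?thesis
      unfolding g_def by (subst Bochner_Integration.integral_diff) (auto simp: measure_pmf.prob_space)
  qed
  also have "measure_pmf.prob M {k. 0 < k} = 1 - pmf M 0"
  proof -
    have "{k. 0 < k} = UNIV - {0::nat}"
      by auto
    then show ?thesis
      using measure_pmf.prob_compl[of "{0::nat}" M] by (simp add: measure_pmf_single)
  qed
  also have "pmf M 0 = (1 - r) ^ m"
    using r unfolding M_def by simp
  also have "(1 - r) ^ m \<le> (1 - r) ^ 1"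
    using r m by (intro power_decreasing) auto
  finally show ?thesis
    unfolding M_def by simp
qed

lemma exp_minus_le_inverse:
  fixes x :: real
  assumes "x > 0"
  shows "exp (- x) \<le> 1 / x"
proof -
  have "x \<le> exp x"
    using exp_ge_add_one_self[of x] by linarith
  then show ?thesis
    using assms by (simp add: exp_minus field_simps)
qed

text \<open>Split the expectation at half the mean \<open>m r / 2\<close>: below it Hoeffding's bound for the
  binomial lower tail applies, above it the integrand is at most \<open>\<surd>(2 / (m r))\<close>.\<close>

lemma expectation_binomial_inv_sqrt_le_inv_sqrt:
  fixes r :: real
  assumes r: "0 < r" "r \<le> 1" and m: "m \<ge> 1"
  shows "measure_pmf.expectation (binomial_pmf m r) (\<lambda>k. 1 / sqrt (real k + 1))
           \<le> (2 / r^2 + sqrt (2 / r)) / sqrt m"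
proof -
  define M where "M = binomial_pmf m r"
  define t where "t = real m * r / 2"
  have t0: "t > 0"
    using r m unfolding t_def by simp
  define g where "g = (\<lambda>k::nat. indicator {k. real k \<le> real m * r - t} k + 1 / sqrt t :: real)"
  have hg: "1 / sqrt (real k + 1) \<le> g k" for k
  proof (cases "real k \<le> real m * r - t")
    case True
    have "1 / sqrt (real k + 1) \<le> 1"
      by (simp add: divide_le_eq)
    moreover have "0 \<le> 1 / sqrt t"
      using t0 by simp
    moreover have "g k = 1 + 1 / sqrt t"
      using True by (simp add: g_def)
    ultimately show ?thesis
      by linarith
  next
    case False
    then have "t \<le> real k + 1"
      unfolding t_def by (simp add: algebra_simps)
    then have "1 / sqrt (real k + 1) \<le> 1 / sqrt t"
      using t0 by (intro divide_left_mono) auto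
    then show ?thesis
      unfolding g_def by (simp add: indicator_def)
  qed
  have "integrable M (\<lambda>k. 1 / sqrt (real k + 1))"
    by (rule measure_pmf.integrable_const_bound[where B = 1]) (auto simp: divide_le_eq)
  moreover have "integrable M g"
    by (rule measure_pmf.integrable_const_bound[where B = "1 + 1 / sqrt t"])
      (use t0 in \<open>auto simp: g_def indicator_def\<close>)
  ultimately have "measure_pmf.expectation M (\<lambda>k. 1 / sqrt (real k + 1)) \<le> measure_pmf.expectation M g"
    using hg by (intro integral_mono) auto
  also have "measure_pmf.expectation M g = measure_pmf.prob M {k. real k \<le> real m * r - t} + 1 / sqrt t"
  proof -
    have "integrable M (indicator {k. real k \<le> real m * r - t} :: nat \<Rightarrow> real)"
      by (rule measure_pmf.integrable_const_bound[where B = 1]) (auto simp: indicator_def)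
    then show ?thesis
      unfolding g_def by (subst Bochner_Integration.integral_add) (auto simp: measure_pmf.prob_space)
  qed
  also have "measure_pmf.prob M {k. real k \<le> real m * r - t} \<le> exp (- (real m * r\<^sup>2 / 2))"
  proof -
    have "measure_pmf.prob M {k. real k \<le> real m * r - t} \<le> exp (-2 * t\<^sup>2 / m)"
      unfolding M_def
      by (rule binomial_distribution.prob_le) (use r m t0 in \<open>auto simp: binomial_distribution_def\<close>)
    also have "-2 * t\<^sup>2 / m = - (real m * r\<^sup>2 / 2)"
      unfolding t_def using m by (simp add: power2_eq_square field_simps)
    finally show ?thesis .
  qed
  also have "exp (- (real m * r\<^sup>2 / 2)) \<le> 2 / r\<^sup>2 / m"
    using exp_minus_le_inverse[of "real m * r\<^sup>2 / 2"] r m by (simp add: mult.commute)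
  also have "\<dots> \<le> 2 / r\<^sup>2 / sqrt m"
  proof (intro divide_left_mono)
    have "sqrt (real m) \<le> sqrt (real m) * sqrt (real m)"
      using m by (intro mult_le_cancel_left1[THEN iffD2]) auto
    then show "sqrt (real m) \<le> real m"
      by simp
  qed (use m r in auto)
  also have "1 / sqrt t = sqrt (2 / r) / sqrt m"
    unfolding t_def using r m by (simp add: real_sqrt_divide real_sqrt_mult field_simps)
  finally show ?thesis
    unfolding M_def by (simp add: add_divide_distrib)
qed

section \<open>Concentration and the quantizer\<close>

lemma prob_abs_linear_form_ge_le:
  fixes pD :: "real pmf" and y :: "nat \<Rightarrow> real" and K lam :: real
  assumes n: "n > 0" and K: "K > 0"
    and bd: "\<And>d i. d \<in> set_pmf pD \<Longrightarrow> i < n \<Longrightarrow> \<bar>d * y i\<bar> \<le> K"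
    and mean: "measure_pmf.expectation pD (\<lambda>x. x) = 0"
    and lam: "lam \<ge> 0"
  shows "measure_pmf.prob (Pi_pmf {..<n} 0 (\<lambda>_. pD)) {d. \<bar>\<Sum>i<n. d i * y i\<bar> \<ge> lam}
           \<le> 2 * exp (- 2 * lam\<^sup>2 / (n * (2 * K)\<^sup>2))"
proof -
  define P where "P = Pi_pmf {..<n} 0 (\<lambda>_. pD)"
  have component: "map_pmf (\<lambda>f. f i) P = pD" if "i < n" for i
    unfolding P_def using that by (subst Pi_pmf_component) auto
  have mean_zero: "(\<Sum>i<n. measure_pmf.expectation P (\<lambda>d. d i * y i)) = 0"
  proof (intro sum.neutral ballI)
    fix i
    assume "i \<in> {..<n}"
    then have "measure_pmf.expectation P (\<lambda>d. d i * y i)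
       = measure_pmf.expectation (map_pmf (\<lambda>f. f i) P) (\<lambda>x. x * y i)"
      by simp
    also have "\<dots> = measure_pmf.expectation pD (\<lambda>x. x * y i)"
      using \<open>i \<in> {..<n}\<close> component by simp
    also have "\<dots> = 0"
      using mean by simp
    finally show "measure_pmf.expectation P (\<lambda>d. d i * y i) = 0" .
  qed
  interpret H: Hoeffding_ineq "measure_pmf P" "{..<n}" "\<lambda>i d. d i * y i" "\<lambda>_. -K" "\<lambda>_. K" 0
  proof unfold_locales
    show "prob_space.indep_vars (measure_pmf P) (\<lambda>_. borel) (\<lambda>i d. d i * y i) {..<n}"
      unfolding P_def
      by (intro prob_space.indep_vars_compose2[OF _ indep_vars_Pi_pmf, where Y = "\<lambda>i v. v * y i"])
         (auto simp: measure_pmf.prob_space_axioms)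
    show "AE x in measure_pmf P. x i * y i \<in> {- K..K}" if "i \<in> {..<n}" for i
    proof (rule AE_pmfI)
      fix x
      assume "x \<in> set_pmf P"
      then have "x i \<in> set_pmf pD"
        using that unfolding P_def by (auto simp: set_Pi_pmf PiE_dflt_def)
      then show "x i * y i \<in> {- K..K}"
        using bd[of "x i" i] that by auto
    qed
    show "0 \<equiv> \<Sum>i<n. measure_pmf.expectation P (\<lambda>d. d i * y i)"
      using mean_zero by simp
  qed simp
  have width: "(\<Sum>i<n. (K - - K)\<^sup>2) = n * (2 * K)\<^sup>2"
    by simp
  have "measure_pmf.prob P {x \<in> space (measure_pmf P). \<bar>(\<Sum>i<n. x i * y i) - 0\<bar> \<ge> lam}
        \<le> 2 * exp (- 2 * lam\<^sup>2 / (\<Sum>i<n. (K - - K)\<^sup>2))"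
    by (rule H.Hoeffding_ineq_abs_ge) (use lam K n in auto)
  then show ?thesis
    unfolding width P_def by simp
qed

lemma Q_index_eq_floor:
  assumes "n > 0" and "\<bar>x\<bar> < Q_len n eps"
  shows "Q_index n eps x = \<lfloor>(x + Q_len n eps) / Q_step n eps\<rfloor>"
proof -
  define L where "L = Q_len n eps"
  define S where "S = Q_step n eps"
  have "S > 0"
    using assms(1) unfolding S_def Q_step_def by simp
  have "\<bar>x\<bar> < L"
    using assms(2) unfolding L_def .
  then have "0 \<le> \<lfloor>(x + L) / S\<rfloor>"
    using \<open>S > 0\<close> by simp
  have "(x + L) / S < 2 * L / S"
    using \<open>\<bar>x\<bar> < L\<close> \<open>S > 0\<close> by (simp add: divide_strict_right_mono)
  also have "\<dots> \<le> of_int (Q_cells n eps)"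
    unfolding Q_cells_def L_def S_def by simp
  finally have "\<lfloor>(x + L) / S\<rfloor> < Q_cells n eps"
    by (simp add: floor_less_iff)
  with \<open>0 \<le> \<lfloor>(x + L) / S\<rfloor>\<close> show ?thesis
    unfolding Q_index_def L_def S_def by simp
qed

lemma Q_eq_imp_close_or_saturated:
  assumes n: "n > 0" and eq: "Q n eps u = Q n eps v"
  shows "\<bar>u - v\<bar> < Q_step n eps \<or> \<bar>u\<bar> \<ge> Q_len n eps \<or> \<bar>v\<bar> \<ge> Q_len n eps"
proof (rule ccontr)
  define L where "L = Q_len n eps"
  define S where "S = Q_step n eps"
  assume "\<not> ?thesis"
  then have inside: "\<bar>u\<bar> < L" "\<bar>v\<bar> < L" and far: "\<bar>u - v\<bar> \<ge> S"
    unfolding L_def S_def by auto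
  have "S > 0"
    using n unfolding S_def Q_step_def by simp
  then have "Q_index n eps u = Q_index n eps v"
    using eq unfolding Q_def S_def[symmetric] by simp
  then have "\<lfloor>(u + L) / S\<rfloor> = \<lfloor>(v + L) / S\<rfloor>"
    using Q_index_eq_floor[OF n] inside unfolding L_def S_def by simp
  then have "\<bar>(u + L) / S - (v + L) / S\<bar> < 1"
    by linarith
  moreover have "(u + L) / S - (v + L) / S = (u - v) / S"
    by (simp add: add_divide_distrib diff_divide_distrib)
  ultimately have "\<bar>u - v\<bar> < S"
    using \<open>S > 0\<close> by (simp add: abs_divide)
  with far show False
    by simp
qed

section \<open>Anti-concentration\<close>

definition fair_coin :: "real \<Rightarrow> real \<Rightarrow> real pmf" where
  "fair_coin a b = map_pmf (\<lambda>s. if s then b else a) (bernoulli_pmf (1/2))"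

text \<open>\<open>bind_pmf (pair_pmf (bernoulli_pmf r) R) (coin_or_return a b)\<close> is the law that with
  probability \<open>r\<close> is a fair coin between \<open>a\<close> and \<open>b\<close> and otherwise follows \<open>R\<close>.\<close>

definition coin_or_return :: "real \<Rightarrow> real \<Rightarrow> bool \<times> real \<Rightarrow> real pmf" where
  "coin_or_return a b = (\<lambda>(c, d). if c then fair_coin a b else return_pmf d)"

lemma pmf_fair_coin:
  assumes "a \<noteq> b"
  shows "pmf (fair_coin a b) x = (if x = a \<or> x = b then 1/2 else 0)"
proof -
  have "pmf (fair_coin a b) x = measure_pmf.prob (bernoulli_pmf (1/2)) ((\<lambda>s. if s then b else a) -` {x})"
    unfolding fair_coin_def by (rule pmf_map)
  also have "(\<lambda>s. if s then b else a) -` {x} = (if x = b then {True} else {}) \<union> (if x = a then {False} else {})"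
    using assms by (auto split: if_splits)
  also have "measure_pmf.prob (bernoulli_pmf (1/2)) \<dots> = (if x = a \<or> x = b then 1/2 else 0)"
    using assms by (auto simp: measure_pmf_single)
  finally show ?thesis .
qed

lemma bind_pair_coin_or_return:
  "bind_pmf (pair_pmf (bernoulli_pmf r) R) (coin_or_return a b)
     = bind_pmf (bernoulli_pmf r) (\<lambda>c. if c then fair_coin a b else R)"
proof -
  have "bind_pmf (pair_pmf (bernoulli_pmf r) R) (coin_or_return a b)
      = bind_pmf (bernoulli_pmf r) (\<lambda>c. bind_pmf R (\<lambda>d. if c then fair_coin a b else return_pmf d))"
    unfolding pair_pmf_def coin_or_return_def by (simp add: bind_assoc_pmf bind_return_pmf)
  also have "\<dots> = bind_pmf (bernoulli_pmf r) (\<lambda>c. if c then fair_coin a b else R)"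
  proof (intro bind_pmf_cong refl)
    fix c :: bool
    show "bind_pmf R (\<lambda>d. if c then fair_coin a b else return_pmf d) = (if c then fair_coin a b else R)"
      by (cases c) (simp_all add: bind_return_pmf')
  qed
  finally show ?thesis .
qed

lemma two_point_mixture_decomposition:
  fixes pD :: "real pmf" and a b :: real
  assumes ab: "a \<in> set_pmf pD" "b \<in> set_pmf pD" "a \<noteq> b" and fin: "finite (set_pmf pD)"
  defines "r \<equiv> min (pmf pD a) (pmf pD b)"
  shows "0 < r" "r \<le> 1/2"
    "\<exists>R. pD = bind_pmf (pair_pmf (bernoulli_pmf r) R) (coin_or_return a b)"
proof -
  show r0: "0 < r"
    unfolding r_def using ab by (simp add: pmf_positive)
  have "pmf pD a + pmf pD b = measure_pmf.prob pD {a, b}"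
    using ab by (simp add: measure_measure_pmf_finite)
  also have "\<dots> \<le> 1"
    by simp
  finally show r2: "r \<le> 1/2"
    unfolding r_def by linarith
  define f where "f x = (pmf pD x - r/2 * indicator {a, b} x) / (1 - r)" for x
  have f_nonneg: "0 \<le> f x" for x
  proof -
    have "r/2 * indicator {a, b} x \<le> pmf pD x"
      using r0 unfolding r_def by (auto simp: indicator_def)
    then show ?thesis
      unfolding f_def using r2 by simp
  qed
  have f_outside: "f x = 0" if "x \<notin> set_pmf pD" for x
    using that ab unfolding f_def by (auto simp: set_pmf_eq indicator_def)
  have "(\<Sum>x\<in>set_pmf pD. f x)
      = ((\<Sum>x\<in>set_pmf pD. pmf pD x) - (\<Sum>x\<in>set_pmf pD. r/2 * indicator {a, b} x)) / (1 - r)"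
    unfolding f_def by (simp only: sum_divide_distrib[symmetric] sum_subtractf)
  also have "(\<Sum>x\<in>set_pmf pD. pmf pD x) = 1"
    using fin by (rule sum_pmf_eq_1) simp
  also have "(\<Sum>x\<in>set_pmf pD. r/2 * indicator {a, b} x) = (\<Sum>x\<in>{a, b}. r/2)"
    using fin ab by (intro sum.mono_neutral_cong_right) (auto simp: indicator_def)
  also have "\<dots> = r"
    using ab by simp
  finally have "(\<Sum>x\<in>set_pmf pD. f x) = 1"
    using r2 by simp
  then have "(\<integral>\<^sup>+x. f x \<partial>count_space UNIV) = 1"
    using fin f_outside
    by (subst nn_integral_count_space'[of "set_pmf pD"]) (auto simp: sum_ennreal f_nonneg)
  with f_nonneg have pmf_R: "pmf (embed_pmf f) x = f x" for x
    by (rule pmf_embed_pmf)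
  have "bind_pmf (pair_pmf (bernoulli_pmf r) (embed_pmf f)) (coin_or_return a b) = pD"
  proof (rule pmf_eqI)
    fix x
    have "pmf (bind_pmf (bernoulli_pmf r) (\<lambda>c. if c then fair_coin a b else embed_pmf f)) x
        = pmf (fair_coin a b) x * r + f x * (1 - r)"
      using r0 r2 by (simp add: pmf_bind pmf_R)
    also have "\<dots> = pmf pD x"
      using r2 ab(3) unfolding f_def pmf_fair_coin[OF ab(3)] by (auto simp: indicator_def)
    finally show "pmf (bind_pmf (pair_pmf (bernoulli_pmf r) (embed_pmf f)) (coin_or_return a b)) x = pmf pD x"
      unfolding bind_pair_coin_or_return .
  qed
  then show "\<exists>R. pD = bind_pmf (pair_pmf (bernoulli_pmf r) R) (coin_or_return a b)"
    by metis
qed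

text \<open>Given the outcomes \<open>\<omega> i\<close> of the \<open>r\<close>-coins and the residual draws, only the fair coins
  remain random. Those at the indices \<open>J\<close> of \<open>S\<close> whose \<open>r\<close>-coin came up make the sum
  affine in a \<open>Binomial(|J|, 1/2)\<close> count with slope \<open>(b - a) w\<close>.\<close>

lemma prob_window_le_given_coins:
  fixes \<omega> :: "nat \<Rightarrow> bool \<times> real" and z :: "nat \<Rightarrow> real"
  assumes S: "S \<subseteq> {..<n}" and zS: "\<And>i. i \<in> S \<Longrightarrow> z i = w"
    and gap: "2 * \<Delta> \<le> \<bar>(b - a) * w\<bar>"
  shows "measure_pmf.prob (Pi_pmf {..<n} 0 (\<lambda>i. coin_or_return a b (\<omega> i))) {d. \<bar>\<Sum>i<n. d i * z i\<bar> < \<Delta>}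
         \<le> 1 / sqrt (real (card {i\<in>S. fst (\<omega> i)}) + 1)"
proof -
  define G where "G = (\<lambda>(c :: bool, d :: real) (s :: bool). if c then (if s then b else a) else d)"
  have coin_or_return_G: "coin_or_return a b x = map_pmf (G x) (bernoulli_pmf (1/2))" for x
    by (cases x) (simp add: coin_or_return_def G_def fair_coin_def)
  define J where "J = {i\<in>S. fst (\<omega> i)}"
  define A where "A = {..<n} - J"
  define B where "B = bernoulli_pmf (1/2)"
  have J: "J \<subseteq> {..<n}" "finite J"
    using S unfolding J_def by (auto intro: finite_subset)
  have AJ: "{..<n} = A \<union> J" "A \<inter> J = {}" "finite A"
    using J unfolding A_def by auto
  have "Pi_pmf {..<n} 0 (\<lambda>i. coin_or_return a b (\<omega> i))
      = map_pmf (\<lambda>h i. if i \<in> {..<n} then G (\<omega> i) (h i) else 0) (Pi_pmf {..<n} False (\<lambda>_. B))"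
    unfolding coin_or_return_G B_def by (rule Pi_pmf_map_dep) simp
  also have "Pi_pmf {..<n} False (\<lambda>_. B)
      = map_pmf (\<lambda>(f, g) i. if i \<in> A then f i else g i)
          (pair_pmf (Pi_pmf A False (\<lambda>_. B)) (Pi_pmf J False (\<lambda>_. B)))"
    by (subst AJ(1)) (rule Pi_pmf_union; use AJ J in auto)
  finally have law: "Pi_pmf {..<n} 0 (\<lambda>i. coin_or_return a b (\<omega> i))
      = map_pmf (\<lambda>(f, g) i. if i < n then G (\<omega> i) (if i \<in> A then f i else g i) else 0)
          (pair_pmf (Pi_pmf A False (\<lambda>_. B)) (Pi_pmf J False (\<lambda>_. B)))"
    by (simp add: map_pmf_comp case_prod_unfold)
  define c0 where "c0 f = (\<Sum>i\<in>A. G (\<omega> i) (f i) * z i) + real (card J) * a * w" for f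
  have sum_eq: "(\<Sum>i<n. G (\<omega> i) (if i \<in> A then f i else g i) * z i)
       = c0 f + (b - a) * w * real (card {i\<in>J. g i})" for f g
  proof -
    have on_J: "G (\<omega> i) (if i \<in> A then f i else g i) * z i = a * w + (b - a) * w * of_bool (g i)"
      if "i \<in> J" for i
      using that AJ zS unfolding J_def G_def by (cases "\<omega> i") (auto simp: algebra_simps)
    have "(\<Sum>i<n. G (\<omega> i) (if i \<in> A then f i else g i) * z i)
        = (\<Sum>i\<in>A. G (\<omega> i) (f i) * z i) + (\<Sum>i\<in>J. a * w + (b - a) * w * of_bool (g i))"
      unfolding AJ(1) using AJ J on_J by (simp add: sum.union_disjoint)
    also have "(\<Sum>i\<in>J. a * w + (b - a) * w * of_bool (g i)) = real (card J) * a * w + (b - a) * w * real (card {i\<in>J. g i})"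
      using J(2) by (simp add: sum.distrib sum_distrib_left[symmetric] sum.inter_filter[symmetric] Int_def)
    finally show ?thesis
      unfolding c0_def by simp
  qed
  have "measure_pmf.prob (Pi_pmf {..<n} 0 (\<lambda>i. coin_or_return a b (\<omega> i))) {d. \<bar>\<Sum>i<n. d i * z i\<bar> < \<Delta>}
      = measure_pmf.prob (pair_pmf (Pi_pmf A False (\<lambda>_. B)) (Pi_pmf J False (\<lambda>_. B)))
          {(f, g). \<bar>c0 f + (b - a) * w * real (card {i\<in>J. g i})\<bar> < \<Delta>}"
    unfolding law by (simp add: vimage_def case_prod_unfold sum_eq)
  also have "\<dots> \<le> 1 / sqrt (real (card J) + 1)"
    unfolding B_def using J(2) gap by (rule prob_pair_count_window_le)
  finally show ?thesis
    unfolding J_def .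
qed

lemma prob_window_le_expectation:
  fixes z :: "nat \<Rightarrow> real"
  assumes mix: "pD = bind_pmf (pair_pmf (bernoulli_pmf r) R) (coin_or_return a b)"
    and r: "0 \<le> r" "r \<le> 1"
    and S: "S \<subseteq> {..<n}" and zS: "\<And>i. i \<in> S \<Longrightarrow> z i = w"
    and gap: "2 * \<Delta> \<le> \<bar>(b - a) * w\<bar>"
  shows "measure_pmf.prob (Pi_pmf {..<n} 0 (\<lambda>_. pD)) {d. \<bar>\<Sum>i<n. d i * z i\<bar> < \<Delta>}
         \<le> measure_pmf.expectation (binomial_pmf (card S) r) (\<lambda>k. 1 / sqrt (real k + 1))"
proof -
  define X where "X = pair_pmf (bernoulli_pmf r) R"
  define PX where "PX = Pi_pmf {..<n} (False, 0) (\<lambda>_. X)"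
  define h where "h = (\<lambda>k::nat. 1 / sqrt (real k + 1))"
  have "finite S"
    using S by (rule finite_subset) simp
  have law: "Pi_pmf {..<n} 0 (\<lambda>_. pD) = bind_pmf PX (\<lambda>\<omega>. Pi_pmf {..<n} 0 (\<lambda>i. coin_or_return a b (\<omega> i)))"
    unfolding mix PX_def X_def by (rule Pi_pmf_bind[where q = "\<lambda>_. coin_or_return a b"]) simp
  have h_bounds: "h k \<le> 1" "0 \<le> h k" for k
    unfolding h_def by (auto simp: divide_le_eq)
  have "measure_pmf.prob (Pi_pmf {..<n} 0 (\<lambda>_. pD)) {d. \<bar>\<Sum>i<n. d i * z i\<bar> < \<Delta>}
        \<le> measure_pmf.expectation PX (\<lambda>\<omega>. h (card {i\<in>S. fst (\<omega> i)}))"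
    unfolding law
  proof (rule measure_bind_pmf_le_expectation)
    fix \<omega>
    show "measure_pmf.prob (Pi_pmf {..<n} 0 (\<lambda>i. coin_or_return a b (\<omega> i))) {d. \<bar>\<Sum>i<n. d i * z i\<bar> < \<Delta>}
       \<le> h (card {i\<in>S. fst (\<omega> i)})"
      unfolding h_def by (rule prob_window_le_given_coins[OF S zS gap])
  next
    show "integrable (measure_pmf PX) (\<lambda>\<omega>. h (card {i\<in>S. fst (\<omega> i)}))"
      by (rule measure_pmf.integrable_const_bound[where B = 1]) (use h_bounds in auto)
  qed
  moreover have "binomial_pmf (card S) r = map_pmf (\<lambda>\<omega>. card {i\<in>S. fst (\<omega> i)}) PX"
  proof -
    have "binomial_pmf (card S) r = map_pmf (\<lambda>f. card {x\<in>S. f x}) (Pi_pmf S False (\<lambda>_. bernoulli_pmf r))"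
      by (rule binomial_pmf_altdef') (use \<open>finite S\<close> r in auto)
    also have "Pi_pmf S False (\<lambda>_. bernoulli_pmf r) = Pi_pmf S False (\<lambda>_. map_pmf fst X)"
      unfolding X_def by (simp add: map_fst_pair_pmf)
    also have "\<dots> = map_pmf (\<lambda>h. fst \<circ> h) (Pi_pmf S (False, 0) (\<lambda>_. X))"
      by (rule Pi_pmf_map) (use \<open>finite S\<close> in auto)
    also have "Pi_pmf S (False, 0) (\<lambda>_. X) = map_pmf (\<lambda>f x. if x \<in> S then f x else (False, 0)) PX"
      unfolding PX_def by (rule Pi_pmf_subset) (use S in auto)
    finally show ?thesis
      by (simp add: map_pmf_comp cong: conj_cong)
  qed
  ultimately show ?thesis
    by (simp add: h_def)
qed

lemma obtain_large_fiber:
  assumes "finite A" "A \<noteq> {}"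
  obtains w where "w \<in> f ` A" "card A \<le> card {x\<in>A. f x = w} * card (f ` A)"
proof -
  define fiber where "fiber w = card {x\<in>A. f x = w}" for w
  have fin: "finite (fiber ` f ` A)" "fiber ` f ` A \<noteq> {}"
    using assms by auto
  obtain w where w: "w \<in> f ` A" "fiber w = Max (fiber ` f ` A)"
    using Max_in[OF fin] by (metis imageE)
  have "card A = card (\<Union>v\<in>f ` A. {x\<in>A. f x = v})"
    by (rule arg_cong[where f = card]) auto
  also have "\<dots> \<le> (\<Sum>v\<in>f ` A. fiber v)"
    unfolding fiber_def using assms(1) by (intro card_UN_le) simp
  also have "\<dots> \<le> card (f ` A) * fiber w"
    using sum_bounded_above[of "f ` A" fiber "fiber w"] w fin by simp
  finally show ?thesis
    using that w(1) unfolding fiber_def by (simp add: mult.commute)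
qed

lemma prob_linear_form_window_le:
  fixes z :: "nat \<Rightarrow> real" and W :: "real set"
  assumes mix: "pD = bind_pmf (pair_pmf (bernoulli_pmf r) R) (coin_or_return a b)"
    and r: "0 < r" "r \<le> 1"
    and W: "finite W" "\<forall>i<n. z i \<noteq> 0 \<longrightarrow> z i \<in> W" "\<forall>w\<in>W. 2 * \<Delta> \<le> \<bar>(b - a) * w\<bar>"
    and t: "card {i. i < n \<and> z i \<noteq> 0} \<ge> 1"
  defines "P \<equiv> measure_pmf.prob (Pi_pmf {..<n} 0 (\<lambda>_. pD)) {d. \<bar>\<Sum>i<n. d i * z i\<bar> < \<Delta>}"
  shows "P \<le> 1 - r/4"
    and "P \<le> (2 / r^2 + sqrt (2 / r)) * sqrt (card W) / sqrt (card {i. i < n \<and> z i \<noteq> 0})"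
proof -
  define Ts where "Ts = {i. i < n \<and> z i \<noteq> 0}"
  define c where "c = 2 / r^2 + sqrt (2 / r)"
  have Ts: "finite Ts" "Ts \<noteq> {}"
    using t unfolding Ts_def by (auto simp: Suc_le_eq card_gt_0_iff)
  obtain w where w: "w \<in> z ` Ts" and fiber: "card Ts \<le> card {i\<in>Ts. z i = w} * card (z ` Ts)"
    using obtain_large_fiber[OF Ts] .
  define S where "S = {i\<in>Ts. z i = w}"
  have "w \<in> W"
    using w W(2) unfolding Ts_def by auto
  have S: "S \<subseteq> {..<n}" "\<And>i. i \<in> S \<Longrightarrow> z i = w"
    unfolding S_def Ts_def by auto
  have "card Ts > 0"
    using Ts by (simp add: card_gt_0_iff)
  moreover have "card Ts \<le> card S * card (z ` Ts)"
    using fiber unfolding S_def .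
  ultimately have m: "card S \<ge> 1"
    by (cases "card S") auto
  define E where "E = measure_pmf.expectation (binomial_pmf (card S) r) (\<lambda>k. 1 / sqrt (real k + 1))"
  have PE: "P \<le> E"
    unfolding P_def E_def
    by (rule prob_window_le_expectation[OF mix _ _ S]) (use r W \<open>w \<in> W\<close> in auto)
  then show "P \<le> 1 - r/4"
    using expectation_binomial_inv_sqrt_le_const[OF r m] unfolding E_def by linarith
  have "card Ts \<le> card S * card W"
  proof -
    have "card (z ` Ts) \<le> card W"
      using W unfolding Ts_def by (intro card_mono) auto
    then show ?thesis
      using fiber unfolding S_def by (meson le_trans mult_le_mono2)
  qed
  then have "sqrt (card Ts) \<le> sqrt (card S) * sqrt (card W)"
    by (metis of_nat_le_iff of_nat_mult real_sqrt_le_mono real_sqrt_mult)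
  moreover have "c \<ge> 0" "sqrt (card S) > 0" "sqrt (card Ts) > 0"
    using r m \<open>card Ts > 0\<close> unfolding c_def by auto
  ultimately have "c / sqrt (card S) \<le> c * sqrt (card W) / sqrt (card Ts)"
    by (simp add: field_simps mult_left_mono)
  with PE expectation_binomial_inv_sqrt_le_inv_sqrt[OF r m]
  show "P \<le> (2 / r^2 + sqrt (2 / r)) * sqrt (card W) / sqrt (card {i. i < n \<and> z i \<noteq> 0})"
    unfolding E_def c_def Ts_def by linarith
qed

section \<open>Collision probability of the quantizer\<close>

lemma Q_collision_subset:
  fixes y y' :: "nat \<Rightarrow> real"
  assumes "n > 0"
  shows "{d. Q n eps (\<Sum>i<n. d i * y i) = Q n eps (\<Sum>i<n. d i * y' i)}
         \<subseteq> {d. \<bar>\<Sum>i<n. d i * (y i - y' i)\<bar> < Q_step n eps}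
           \<union> {d. \<bar>\<Sum>i<n. d i * y i\<bar> \<ge> Q_len n eps} \<union> {d. \<bar>\<Sum>i<n. d i * y' i\<bar> \<ge> Q_len n eps}"
proof
  fix d
  assume "d \<in> {d. Q n eps (\<Sum>i<n. d i * y i) = Q n eps (\<Sum>i<n. d i * y' i)}"
  then have "\<bar>(\<Sum>i<n. d i * y i) - (\<Sum>i<n. d i * y' i)\<bar> < Q_step n eps
      \<or> \<bar>\<Sum>i<n. d i * y i\<bar> \<ge> Q_len n eps \<or> \<bar>\<Sum>i<n. d i * y' i\<bar> \<ge> Q_len n eps"
    using Q_eq_imp_close_or_saturated[OF assms] by blast
  moreover have "(\<Sum>i<n. d i * y i) - (\<Sum>i<n. d i * y' i) = (\<Sum>i<n. d i * (y i - y' i))"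
    by (simp add: sum_subtractf right_diff_distrib)
  ultimately show "d \<in> {d. \<bar>\<Sum>i<n. d i * (y i - y' i)\<bar> < Q_step n eps}
      \<union> {d. \<bar>\<Sum>i<n. d i * y i\<bar> \<ge> Q_len n eps} \<union> {d. \<bar>\<Sum>i<n. d i * y' i\<bar> \<ge> Q_len n eps}"
    by auto
qed

lemma prob_Q_collision_le:
  fixes Y W :: "real set" and y y' :: "nat \<Rightarrow> real"
  assumes mix: "pD = bind_pmf (pair_pmf (bernoulli_pmf r) R) (coin_or_return a b)"
    and r: "0 < r" "r \<le> 1"
    and mean: "measure_pmf.expectation pD (\<lambda>x. x) = 0"
    and K: "K > 0" "\<forall>x\<in>set_pmf pD. \<forall>u\<in>Y. \<bar>x * u\<bar> \<le> K"
    and W: "finite W" "\<forall>u\<in>Y. \<forall>v\<in>Y. u \<noteq> v \<longrightarrow> u - v \<in> W" "\<forall>w\<in>W. \<delta> \<le> \<bar>w\<bar>"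
    and step: "2 * Q_step n eps \<le> \<bar>b - a\<bar> * \<delta>"
    and n: "n > 0" and y: "\<forall>i<n. y i \<in> Y \<and> y' i \<in> Y"
    and t: "card {i. i < n \<and> y i \<noteq> y' i} \<ge> 1"
  shows "measure_pmf.prob (Pi_pmf {..<n} 0 (\<lambda>_. pD))
           {d. Q n eps (\<Sum>i<n. d i * y i) = Q n eps (\<Sum>i<n. d i * y' i)}
         \<le> min (1 - r/4) ((2 / r^2 + sqrt (2 / r)) * sqrt (card W)
                            / sqrt (card {i. i < n \<and> y i \<noteq> y' i}))
           + 4 * exp (- 2 * (Q_len n eps)\<^sup>2 / (n * (2 * K)\<^sup>2))"
proof -
  define P where "P = Pi_pmf {..<n} 0 (\<lambda>_. pD)"
  define window where "window = {d. \<bar>\<Sum>i<n. d i * (y i - y' i)\<bar> < Q_step n eps}"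
  define tail where "tail u = {d. \<bar>\<Sum>i<n. d i * u i\<bar> \<ge> Q_len n eps}" for u :: "nat \<Rightarrow> real"
  have "measure_pmf.prob P {d. Q n eps (\<Sum>i<n. d i * y i) = Q n eps (\<Sum>i<n. d i * y' i)}
      \<le> measure_pmf.prob P (window \<union> tail y \<union> tail y')"
    using Q_collision_subset[OF n] unfolding window_def tail_def
    by (rule measure_pmf.finite_measure_mono) simp
  also have "\<dots> \<le> measure_pmf.prob P window + measure_pmf.prob P (tail y) + measure_pmf.prob P (tail y')"
    using measure_Un_le[of "window \<union> tail y" "measure_pmf P" "tail y'"]
      measure_Un_le[of window "measure_pmf P" "tail y"] by simp
  finally have union_bound: "measure_pmf.prob P {d. Q n eps (\<Sum>i<n. d i * y i) = Q n eps (\<Sum>i<n. d i * y' i)}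
      \<le> measure_pmf.prob P window + measure_pmf.prob P (tail y) + measure_pmf.prob P (tail y')" .
  have "\<forall>w\<in>W. 2 * Q_step n eps \<le> \<bar>(b - a) * w\<bar>"
  proof
    fix w
    assume "w \<in> W"
    then have "\<bar>b - a\<bar> * \<delta> \<le> \<bar>b - a\<bar> * \<bar>w\<bar>"
      using W(3) by (intro mult_left_mono) auto
    then show "2 * Q_step n eps \<le> \<bar>(b - a) * w\<bar>"
      using step by (simp add: abs_mult)
  qed
  moreover have "{i. i < n \<and> y i - y' i \<noteq> 0} = {i. i < n \<and> y i \<noteq> y' i}"
    by auto
  ultimately have window_le: "measure_pmf.prob P window
      \<le> min (1 - r/4) ((2 / r^2 + sqrt (2 / r)) * sqrt (card W) / sqrt (card {i. i < n \<and> y i \<noteq> y' i}))"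
    using prob_linear_form_window_le[OF mix r W(1), of n "\<lambda>i. y i - y' i"] W(2) y t
    unfolding P_def window_def by auto
  have tail_le: "measure_pmf.prob P (tail u) \<le> 2 * exp (- 2 * (Q_len n eps)\<^sup>2 / (n * (2 * K)\<^sup>2))"
    if "\<forall>i<n. u i \<in> Y" for u
    unfolding P_def tail_def
    by (rule prob_abs_linear_form_ge_le[OF n K(1) _ mean]) (use K that in \<open>auto simp: Q_len_def\<close>)
  show ?thesis
    using union_bound window_le tail_le[of y] tail_le[of y'] y unfolding P_def by auto
qed

lemma obtain_two_point_mixture:
  fixes pD :: "real pmf"
  assumes "finite (set_pmf pD)" and "card (set_pmf pD) \<ge> 2"
  obtains a b r R where "a \<noteq> b" "0 < r" "r \<le> 1/2"
    "pD = bind_pmf (pair_pmf (bernoulli_pmf r) R) (coin_or_return a b)"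
proof -
  have "\<not> card (set_pmf pD) \<le> Suc 0"
    using assms(2) by simp
  then obtain a b where "a \<in> set_pmf pD" "b \<in> set_pmf pD" "a \<noteq> b"
    using assms(1) by (auto simp: card_le_Suc0_iff_eq)
  with two_point_mixture_decomposition[OF this assms(1)] that show ?thesis
    by blast
qed

lemma obtain_abs_product_bound:
  fixes A B :: "real set"
  assumes "finite A" "finite B"
  obtains K where "K > 0" "\<forall>x\<in>A. \<forall>u\<in>B. \<bar>x * u\<bar> \<le> K"
proof -
  have "bounded ((\<lambda>(x, u). x * u) ` (A \<times> B))"
    using assms by (intro finite_imp_bounded) auto
  with that show ?thesis
    unfolding bounded_pos by force
qed

lemma obtain_difference_gap:
  fixes Y :: "real set"
  assumes "finite Y"
  obtains W \<delta> where "finite W" "\<forall>u\<in>Y. \<forall>v\<in>Y. u \<noteq> v \<longrightarrow> u - v \<in> W" "\<delta> > 0" "\<forall>w\<in>W. \<delta> \<le> \<bar>w\<bar>"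
proof
  define W where "W = {u - v |u v. u \<in> Y \<and> v \<in> Y} - {0}"
  show "finite W"
    unfolding W_def using assms by (auto intro: finite_image_set2)
  show "\<forall>u\<in>Y. \<forall>v\<in>Y. u \<noteq> v \<longrightarrow> u - v \<in> W"
    unfolding W_def by auto
  show "Min (insert 1 (abs ` W)) > 0"
    using \<open>finite W\<close> unfolding W_def by (auto simp: Min_gr_iff)
  show "\<forall>w\<in>W. Min (insert 1 (abs ` W)) \<le> \<bar>w\<bar>"
    using \<open>finite W\<close> by (intro ballI Min_le) auto
qed

lemma eventually_tail_and_step_small:
  assumes "eps > 0" "K > 0" "\<gamma> > 0" "r > 0"
  defines "T n \<equiv> 4 * exp (- 2 * (Q_len n eps)\<^sup>2 / (real n * (2 * K)\<^sup>2))"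
  shows "eventually (\<lambda>n. T n \<le> r/8 \<and> sqrt (real n) * T n \<le> 1 \<and> 2 * Q_step n eps \<le> \<gamma> \<and> n > 0)
           sequentially"
proof -
  have "T \<longlonglongrightarrow> 0" "(\<lambda>n. sqrt (real n) * T n) \<longlonglongrightarrow> 0" "(\<lambda>n. 2 * Q_step n eps) \<longlonglongrightarrow> 0"
    unfolding T_def Q_len_def Q_step_def using assms(1,2) by real_asymp+
  note lim = this
  have "eventually (\<lambda>n. T n < r/8) sequentially"
    using assms(4) by (intro order_tendstoD(2)[OF lim(1)]) simp
  moreover have "eventually (\<lambda>n. sqrt (real n) * T n < 1) sequentially"
    by (intro order_tendstoD(2)[OF lim(2)]) simp
  moreover have "eventually (\<lambda>n. 2 * Q_step n eps < \<gamma>) sequentially"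
    using assms(3) by (intro order_tendstoD(2)[OF lim(3)])
  ultimately show ?thesis
    using eventually_gt_at_top[of 0] by eventually_elim auto
qed

theorem lemma4:
  fixes Y D :: "real set" and pD :: "real pmf" and eps :: real
  assumes "finite Y" and "finite D"
    and "set_pmf pD \<subseteq> D"
    and "measure_pmf.expectation pD (\<lambda>x. x) = 0"
    and "card (set_pmf pD) \<ge> 2"
    and "eps > 0"
  shows "\<exists>c p_tilde. p_tilde < 1 \<and> (\<exists>N. \<forall>n\<ge>N. \<forall>y y' :: nat \<Rightarrow> real.
           (\<forall>i<n. y i \<in> Y \<and> y' i \<in> Y) \<longrightarrow>
           card {i. i < n \<and> y i \<noteq> y' i} \<ge> 1 \<longrightarrow>
           measure_pmf.prob (Pi_pmf {..<n} 0 (\<lambda>_. pD))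
             {d. Q n eps (\<Sum>i<n. d i * y i) = Q n eps (\<Sum>i<n. d i * y' i)}
           \<le> min p_tilde (c / sqrt (real (card {i. i < n \<and> y i \<noteq> y' i}))))"
proof -
  have finite_support: "finite (set_pmf pD)"
    using assms(2,3) finite_subset by blast
  obtain a b r R where "a \<noteq> b" and r: "0 < r" "r \<le> 1/2"
    and mix: "pD = bind_pmf (pair_pmf (bernoulli_pmf r) R) (coin_or_return a b)"
    using obtain_two_point_mixture[OF finite_support assms(5)] .
  obtain K where K: "K > 0" "\<forall>x\<in>set_pmf pD. \<forall>u\<in>Y. \<bar>x * u\<bar> \<le> K"
    using obtain_abs_product_bound[OF finite_support assms(1)] .
  obtain W \<delta> where W: "finite W" "\<forall>u\<in>Y. \<forall>v\<in>Y. u \<noteq> v \<longrightarrow> u - v \<in> W" "\<forall>w\<in>W. \<delta> \<le> \<bar>w\<bar>"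
    and "\<delta> > 0"
    using obtain_difference_gap[OF assms(1)] by metis
  define T where "T n = 4 * exp (- 2 * (Q_len n eps)\<^sup>2 / (real n * (2 * K)\<^sup>2))" for n :: nat
  obtain N where N: "\<And>n. n \<ge> N \<Longrightarrow> T n \<le> r/8 \<and> sqrt (real n) * T n \<le> 1
                          \<and> 2 * Q_step n eps \<le> \<bar>b - a\<bar> * \<delta> \<and> n > 0"
    using eventually_tail_and_step_small[OF assms(6) K(1) _ r(1), of "\<bar>b - a\<bar> * \<delta>"]
      \<open>a \<noteq> b\<close> \<open>\<delta> > 0\<close> unfolding T_def eventually_sequentially by auto
  define c where "c = (2 / r^2 + sqrt (2 / r)) * sqrt (card W)"
  show ?thesis
  proof (intro exI conjI allI impI)
    show "1 - r/8 < 1"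
      using r by simp
    fix n and y y' :: "nat \<Rightarrow> real"
    assume n: "n \<ge> N" and y: "\<forall>i<n. y i \<in> Y \<and> y' i \<in> Y"
      and t: "card {i. i < n \<and> y i \<noteq> y' i} \<ge> 1"
    define t where "t = card {i. i < n \<and> y i \<noteq> y' i}"
    have P: "measure_pmf.prob (Pi_pmf {..<n} 0 (\<lambda>_. pD))
               {d. Q n eps (\<Sum>i<n. d i * y i) = Q n eps (\<Sum>i<n. d i * y' i)}
             \<le> min (1 - r/4) (c / sqrt t) + T n"
      using prob_Q_collision_le[OF mix r(1) _ assms(4) K W] r(2) N[OF n] y t
      unfolding c_def t_def T_def by auto
    have "t \<le> n"
      unfolding t_def using card_mono[of "{..<n}" "{i. i < n \<and> y i \<noteq> y' i}"] by auto
    then have "sqrt t * T n \<le> sqrt n * T n"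
      by (intro mult_right_mono) (auto simp: T_def)
    then have "T n \<le> 1 / sqrt t"
      using N[OF n] t unfolding t_def by (simp add: field_simps)
    with P N[OF n] show "measure_pmf.prob (Pi_pmf {..<n} 0 (\<lambda>_. pD))
                   {d. Q n eps (\<Sum>i<n. d i * y i) = Q n eps (\<Sum>i<n. d i * y' i)}
                 \<le> min (1 - r/8) ((c + 1) / sqrt t)"
      unfolding min.bounded_iff add_divide_distrib
      using min.cobounded1[of "1 - r/4" "c / sqrt t"] min.cobounded2[of "1 - r/4" "c / sqrt t"]
      by linarith
  qed
qed

end
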